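(* Let $r,m\in\mathbb{N}$ with $r\ge1$, and let $G$ be a graph in which every vertex has finite $(r,m)$-rank. Then $\mathrm{adm}_r(G)\le m$.
   Context: Admissibility: for a linear order $\le$ on $V(G)$, the $r$-backconnectivity of a vertex $v$ is the maximum number of paths with at least one and at most $r$ edges that start at $v$, end at vertices $w\ge v$, and are pairwise vertex-disjoint except for their common endpoint $v$. $\mathrm{adm}_r(G)$ is the minimum over all linear orders of $V(G)$ of the maximum $r$-backconnectivity of a vertex. $N_r^G(v)$ is the closed $r$-neighborhood of $v$; $G-S$ is the subgraph induced on $V(G)\setminus S$. The $(r,m)$-rank of vertices of $G$ (values in $\mathbb{N}\cup\{\infty\}$) is defined by: initially every vertex has rank $\infty$; in rounds $i=1,2,\dots$, every vertex $v$ currently of rank $\infty$ receives rank $i$ if there exists $S\subseteq V(G)\setminus\{v\}$ with $|S|\le m$ such that every vertex of $N_r^{G-S}(v)\setminus\{v\}$ received a finite rank in rounds $1,\dots,i-1$; the procedure stops when all ranks are finite or a round assigns no new rank. *)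

theory Defs
  imports Main "HOL-Library.Extended_Nat"
begin

definition graph :: "'a set \<Rightarrow> ('a \<Rightarrow> 'a \<Rightarrow> bool) \<Rightarrow> bool" where
  "graph V E \<longleftrightarrow> finite V \<and> (\<forall>x y. E x y \<longrightarrow> x \<in> V \<and> y \<in> V \<and> x \<noteq> y \<and> E y x)"

definition walk_in :: "('a \<Rightarrow> 'a \<Rightarrow> bool) \<Rightarrow> 'a set \<Rightarrow> 'a list \<Rightarrow> bool" where
  "walk_in E X p \<longleftrightarrow> p \<noteq> [] \<and> set p \<subseteq> X \<and> (\<forall>i. Suc i < length p \<longrightarrow> E (p ! i) (p ! Suc i))"

definition nbhd :: "'a set \<Rightarrow> ('a \<Rightarrow> 'a \<Rightarrow> bool) \<Rightarrow> 'a set \<Rightarrow> nat \<Rightarrow> 'a \<Rightarrow> 'a set" where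
  "nbhd V E S r v = {u. \<exists>p. walk_in E (V - S) p \<and> hd p = v \<and> last p = u \<and> length p \<le> Suc r}"

text \<open>Paths with at least one and at most r edges from v to some w with v \<le> w (w.r.t. the order le).\<close>
definition back_paths :: "'a set \<Rightarrow> ('a \<Rightarrow> 'a \<Rightarrow> bool) \<Rightarrow> 'a rel \<Rightarrow> nat \<Rightarrow> 'a \<Rightarrow> 'a list set" where
  "back_paths V E le r v = {p. walk_in E V p \<and> distinct p \<and> 2 \<le> length p \<and> length p \<le> Suc r
                              \<and> hd p = v \<and> (v, last p) \<in> le}"

definition backconn :: "'a set \<Rightarrow> ('a \<Rightarrow> 'a \<Rightarrow> bool) \<Rightarrow> 'a rel \<Rightarrow> nat \<Rightarrow> 'a \<Rightarrow> nat" where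
  "backconn V E le r v = Max {card P | P. P \<subseteq> back_paths V E le r v \<and>
        (\<forall>p\<in>P. \<forall>q\<in>P. p \<noteq> q \<longrightarrow> set p \<inter> set q = {v})}"

text \<open>adm_r(G) = min over linear orders of V of the max r-backconnectivity
  (written as the least bound achieved by some linear order).\<close>
definition adm :: "'a set \<Rightarrow> ('a \<Rightarrow> 'a \<Rightarrow> bool) \<Rightarrow> nat \<Rightarrow> nat" where
  "adm V E r = (LEAST k. \<exists>le. linear_order_on V le \<and> (\<forall>v\<in>V. backconn V E le r v \<le> k))"

text \<open>ranked V E r m i = set of vertices that received a finite rank in rounds 1..i.\<close>
fun ranked :: "'a set \<Rightarrow> ('a \<Rightarrow> 'a \<Rightarrow> bool) \<Rightarrow> nat \<Rightarrow> nat \<Rightarrow> nat \<Rightarrow> 'a set" where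
  "ranked V E r m 0 = {}"
| "ranked V E r m (Suc i) = ranked V E r m i \<union>
     {v \<in> V. \<exists>S. S \<subseteq> V - {v} \<and> card S \<le> m \<and> nbhd V E S r v - {v} \<subseteq> ranked V E r m i}"

definition rank :: "'a set \<Rightarrow> ('a \<Rightarrow> 'a \<Rightarrow> bool) \<Rightarrow> nat \<Rightarrow> nat \<Rightarrow> 'a \<Rightarrow> enat" where
  "rank V E r m v = (if \<exists>i. v \<in> ranked V E r m i
                      then enat (LEAST i. v \<in> ranked V E r m i) else \<infinity>)"

end

theory Submission
  imports Defs
begin

text \<open>Order the vertices by rank, breaking ties arbitrarily. A vertex v of rank i has a set S of
  at most m other vertices such that every vertex of the r-neighbourhood of v in G - S, other than v,
  has rank < i. A path of length at most r from v to a later vertex w ends at a vertex of rank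
  \<open>\<ge> i\<close>, so it cannot stay in G - S: it meets S. Paths that are pairwise disjoint apart from v
  meet S in distinct vertices, so there are at most m of them.\<close>

lemma linear_order_on_refine:
  fixes f :: "'a \<Rightarrow> 'b::linorder"
  assumes "linear_order_on V r"
  shows "linear_order_on V
    {(x, y). x \<in> V \<and> y \<in> V \<and> (f x < f y \<or> f x = f y \<and> (x, y) \<in> r)}"
    (is "linear_order_on V ?le")
proof -
  have r: "refl_on V r" "trans r" "antisym r" "total_on V r"
    using assms by (simp_all add: linear_order_on_def partial_order_on_def preorder_on_def)
  have "refl_on V ?le" using r(1) by (simp add: refl_on_def)
  moreover have "trans ?le"
    using r(2) unfolding trans_def by (smt (verit) case_prodD case_prodI mem_Collect_eq order_less_trans)
  moreover have "antisym ?le"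
    using r(3) unfolding antisym_def by auto
  moreover have "total_on V ?le"
    using r(4) unfolding total_on_def by (auto simp: neq_iff)
  ultimately show ?thesis
    by (simp add: linear_order_on_def partial_order_on_def preorder_on_def subset_iff)
qed

lemma card_le_card_if_paths_hit:
  assumes "finite S" "v \<notin> S"
    and hit: "\<forall>p\<in>P. set p \<inter> S \<noteq> {}"
    and disj: "\<forall>p\<in>P. \<forall>q\<in>P. p \<noteq> q \<longrightarrow> set p \<inter> set q = {v}"
  shows "card P \<le> card S"
proof -
  define h where "h p = (SOME s. s \<in> set p \<inter> S)" for p
  have h: "h p \<in> set p \<inter> S" if "p \<in> P" for p
    using hit that unfolding h_def by (metis ex_in_conv someI_ex)
  have "inj_on h P"
  proof
    fix p q assume "p \<in> P" "q \<in> P" "h p = h q"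
    then have "h p \<in> set p \<inter> set q" "h p \<noteq> v"
      using h[of p] h[of q] \<open>v \<notin> S\<close> by auto
    with disj \<open>p \<in> P\<close> \<open>q \<in> P\<close> show "p = q" by blast
  qed
  moreover have "h ` P \<subseteq> S" using h by blast
  ultimately show ?thesis using \<open>finite S\<close> card_inj_on_le by blast
qed

lemma backconn_le_card_separator:
  assumes "finite S" "v \<notin> S"
    and "\<forall>p\<in>back_paths V E le r v. set p \<inter> S \<noteq> {}"
  shows "backconn V E le r v \<le> card S"
proof -
  let ?A = "{card P | P. P \<subseteq> back_paths V E le r v \<and>
        (\<forall>p\<in>P. \<forall>q\<in>P. p \<noteq> q \<longrightarrow> set p \<inter> set q = {v})}"
  have bound: "k \<le> card S" if "k \<in> ?A" for k
  proof -
    from that obtain P where P: "k = card P" "P \<subseteq> back_paths V E le r v"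
      "\<forall>p\<in>P. \<forall>q\<in>P. p \<noteq> q \<longrightarrow> set p \<inter> set q = {v}" by blast
    moreover have "\<forall>p\<in>P. set p \<inter> S \<noteq> {}" using P(2) assms(3) by blast
    ultimately show ?thesis using card_le_card_if_paths_hit[OF assms(1,2)] by blast
  qed
  have "?A \<subseteq> {..card S}" using bound by blast
  then have "finite ?A" by (rule finite_subset) simp
  moreover have "?A \<noteq> {}" by auto
  ultimately show ?thesis unfolding backconn_def using bound by (simp add: Max.boundedI)
qed

lemma last_back_path_in_nbhd:
  assumes "p \<in> back_paths V E le r v" "set p \<inter> S = {}"
  shows "last p \<in> nbhd V E S r v - {v}"
proof -
  from assms(1) have p: "walk_in E V p" "distinct p" "2 \<le> length p" "length p \<le> Suc r" "hd p = v"
    unfolding back_paths_def by auto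
  have "walk_in E (V - S) p" using p(1) assms(2) unfolding walk_in_def by auto
  then have "last p \<in> nbhd V E S r v" unfolding nbhd_def using p by auto
  moreover obtain a xs b where "p = a # xs @ [b]"
    using p(3) by (metis Suc_le_length_iff numeral_2_eq_2 rev_exhaust list.distinct(1))
  then have "last p \<noteq> v" using p(2,5) by auto
  ultimately show ?thesis by blast
qed

lemma rank_le_if_ranked:
  assumes "u \<in> ranked V E r m j"
  shows "rank V E r m u \<le> enat j"
  using assms unfolding rank_def by (auto intro: Least_le)

lemma rank_finite_imp_separator:
  assumes "finite V" "v \<in> V" "rank V E r m v \<noteq> \<infinity>"
  obtains S where "finite S" "v \<notin> S" "card S \<le> m"
    "\<forall>u\<in>nbhd V E S r v - {v}. rank V E r m u < rank V E r m v"
proof -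
  define i where "i = (LEAST i. v \<in> ranked V E r m i)"
  have rank_v: "rank V E r m v = enat i" and "v \<in> ranked V E r m i"
    using assms(3) unfolding rank_def i_def by (auto split: if_splits intro: LeastI)
  then obtain j where j: "i = Suc j" by (cases i) auto
  have "v \<notin> ranked V E r m j"
    using rank_le_if_ranked[of v V E r m j] rank_v j by auto
  with \<open>v \<in> ranked V E r m i\<close> j obtain S where S: "S \<subseteq> V - {v}" "card S \<le> m"
    "nbhd V E S r v - {v} \<subseteq> ranked V E r m j" by auto
  have "finite S" using S(1) assms(1) by (meson finite_Diff finite_subset)
  moreover have "rank V E r m u < rank V E r m v" if "u \<in> nbhd V E S r v - {v}" for u
  proof -
    have "rank V E r m u \<le> enat j" by (rule rank_le_if_ranked) (use S(3) that in blast)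
    then show ?thesis using rank_v j by (simp add: le_less_trans)
  qed
  ultimately show thesis using that S by blast
qed

lemma backconn_le_if_order_respects_rank:
  assumes "finite V" "v \<in> V" "rank V E r m v \<noteq> \<infinity>"
    and respects: "\<And>w. (v, w) \<in> le \<Longrightarrow> rank V E r m v \<le> rank V E r m w"
  shows "backconn V E le r v \<le> m"
proof -
  obtain S where S: "finite S" "v \<notin> S" "card S \<le> m"
    and lower: "\<forall>u\<in>nbhd V E S r v - {v}. rank V E r m u < rank V E r m v"
    using rank_finite_imp_separator[OF assms(1-3)] by blast
  have "set p \<inter> S \<noteq> {}" if p: "p \<in> back_paths V E le r v" for p
  proof
    assume "set p \<inter> S = {}"
    then have "rank V E r m (last p) < rank V E r m v"
      using lower last_back_path_in_nbhd[OF p] by blast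
    moreover have "(v, last p) \<in> le" using p unfolding back_paths_def by auto
    ultimately show False using respects by (simp add: leD)
  qed
  then have "backconn V E le r v \<le> card S" by (intro backconn_le_card_separator S(1,2)) blast
  with S(3) show ?thesis by simp
qed

theorem lemma3p7:
  fixes V :: "'a set" and E :: "'a \<Rightarrow> 'a \<Rightarrow> bool" and r m :: nat
  assumes "graph V E" and "r \<ge> 1"
    and "\<forall>v\<in>V. rank V E r m v \<noteq> \<infinity>"
  shows "adm V E r \<le> m"
proof -
  have "finite V" using assms(1) unfolding graph_def by blast
  obtain r0 where "well_order_on V r0" using well_order_on by blast
  define le where "le = {(x, y). x \<in> V \<and> y \<in> V \<and>
    (rank V E r m x < rank V E r m y \<or> rank V E r m x = rank V E r m y \<and> (x, y) \<in> r0)}"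
  have "linear_order_on V le"
    unfolding le_def
    by (rule linear_order_on_refine) (use \<open>well_order_on V r0\<close> in \<open>simp add: well_order_on_def\<close>)
  moreover have "backconn V E le r v \<le> m" if "v \<in> V" for v
    by (rule backconn_le_if_order_respects_rank[OF \<open>finite V\<close> that])
      (use assms(3) that in \<open>auto simp: le_def\<close>)
  ultimately show ?thesis
    unfolding adm_def by (intro Least_le) blast
qed

end
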